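(* Let $r\ge 1$ and let $G$ be an $r$-regular graph of order $n$. Then $\mathrm{LIF}(G)\ge \frac{2}{r+1}\,n$. Moreover, the bound is sharp: for the complete graph $K_{r+1}$ (which is $r$-regular of order $r+1$) one has $\mathrm{LIF}(K_{r+1})=2=\frac{2}{r+1}(r+1)$.
   Context: All graphs are finite and simple. A linear forest is a forest each of whose connected components is a path (a single vertex counts as a path). For a graph $G$, $\mathrm{LIF}(G)$ denotes the maximum number of vertices of an induced subgraph of $G$ that is a linear forest. The order of a graph is its number of vertices. *)

theory Defs
  imports Complex_Main
begin

definition simple_graph :: "'a set \<Rightarrow> ('a \<Rightarrow> 'a \<Rightarrow> bool) \<Rightarrow> bool" where
  "simple_graph V E \<longleftrightarrow> finite V \<and> (\<forall>x y. E x y \<longrightarrow> x \<in> V \<and> y \<in> V)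
     \<and> (\<forall>x y. E x y \<longrightarrow> E y x) \<and> (\<forall>x. \<not> E x x)"

definition degree :: "'a set \<Rightarrow> ('a \<Rightarrow> 'a \<Rightarrow> bool) \<Rightarrow> 'a \<Rightarrow> nat" where
  "degree V E v = card {u \<in> V. E v u}"

definition regular :: "'a set \<Rightarrow> ('a \<Rightarrow> 'a \<Rightarrow> bool) \<Rightarrow> nat \<Rightarrow> bool" where
  "regular V E r \<longleftrightarrow> (\<forall>v\<in>V. degree V E v = r)"

definition component :: "'a set \<Rightarrow> ('a \<Rightarrow> 'a \<Rightarrow> bool) \<Rightarrow> 'a \<Rightarrow> 'a set" where
  "component S E v = {u. (v, u) \<in> {(x, y). x \<in> S \<and> y \<in> S \<and> E x y}\<^sup>*}"

definition is_path_graph :: "'a set \<Rightarrow> ('a \<Rightarrow> 'a \<Rightarrow> bool) \<Rightarrow> bool" where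
  "is_path_graph C E \<longleftrightarrow> (\<exists>xs. xs \<noteq> [] \<and> distinct xs \<and> set xs = C \<and>
     (\<forall>i<length xs. \<forall>j<length xs. E (xs ! i) (xs ! j) \<longleftrightarrow> (i + 1 = j \<or> j + 1 = i)))"

definition induced_linear_forest :: "'a set \<Rightarrow> ('a \<Rightarrow> 'a \<Rightarrow> bool) \<Rightarrow> bool" where
  "induced_linear_forest S E \<longleftrightarrow> (\<forall>v\<in>S. is_path_graph (component S E v) E)"

definition LIF :: "'a set \<Rightarrow> ('a \<Rightarrow> 'a \<Rightarrow> bool) \<Rightarrow> nat" where
  "LIF V E = Max {card S | S. S \<subseteq> V \<and> induced_linear_forest S E}"

end

theory Submission
  imports Defs
begin

text \<open>By Lov\'asz's partition theorem the vertices of an \<open>r\<close>-regular graph split into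
\<open>k = \<lceil>r/2\<rceil>\<close> classes, each inducing a subgraph of maximum degree at most \<open>c\<^sub>j\<close>, where
\<open>c\<^sub>j = 1\<close> except for one class with \<open>c\<^sub>j = 2\<close> when \<open>r\<close> is even, so that
\<open>\<Sum>(c\<^sub>j + 1) = r + 1\<close>. A class of maximum degree 1 is itself a linear forest, and a class
of maximum degree 2 (disjoint paths and cycles) contains an induced linear forest on
two thirds of its vertices. Hence \<open>2 |P\<^sub>j| \<le> (c\<^sub>j + 1) LIF(G)\<close> for every class, and summing
gives \<open>2n \<le> (r + 1) LIF(G)\<close>. In \<open>K\<^sub>r\<^sub>+\<^sub>1\<close> every vertex set is a clique, and a clique
inducing a path has at most two vertices.\<close>

section \<open>Components of induced subgraphs\<close>

definition induced_rel :: "'a set \<Rightarrow> ('a \<Rightarrow> 'a \<Rightarrow> bool) \<Rightarrow> ('a \<times> 'a) set" where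
  "induced_rel S E = {(x, y). x \<in> S \<and> y \<in> S \<and> E x y}"

lemma component_induced_rel: "component S E v = {u. (v, u) \<in> (induced_rel S E)\<^sup>*}"
  unfolding component_def induced_rel_def ..

lemma component_refl: "v \<in> component S E v"
  by (simp add: component_induced_rel)

lemma component_subset:
  assumes "v \<in> S"
  shows "component S E v \<subseteq> S"
proof
  fix u
  assume "u \<in> component S E v"
  then have "(v, u) \<in> (induced_rel S E)\<^sup>*"
    by (simp add: component_induced_rel)
  then show "u \<in> S"
    using assms by induction (auto simp: induced_rel_def)
qed

lemma component_eq:
  assumes "symp E" and "u \<in> component S E v"
  shows "component S E u = component S E v"
proof -
  have "sym ((induced_rel S E)\<^sup>*)"
    using assms(1) by (intro sym_rtrancl) (auto simp: sym_def induced_rel_def dest: sympD)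
  moreover have vu: "(v, u) \<in> (induced_rel S E)\<^sup>*"
    using assms(2) by (simp add: component_induced_rel)
  ultimately have uv: "(u, v) \<in> (induced_rel S E)\<^sup>*"
    by (rule symD)
  show ?thesis
    unfolding component_induced_rel using rtrancl_trans[OF uv] rtrancl_trans[OF vu] by blast
qed

lemma component_mono:
  assumes "S \<subseteq> T"
  shows "component S E v \<subseteq> component T E v"
proof -
  have "induced_rel S E \<subseteq> induced_rel T E"
    using assms by (auto simp: induced_rel_def)
  then have "(induced_rel S E)\<^sup>* \<subseteq> (induced_rel T E)\<^sup>*"
    by (rule rtrancl_mono)
  then show ?thesis
    unfolding component_induced_rel by blast
qed

lemma component_insert_new:
  "component (insert z T) E z = insert z (\<Union>y\<in>{y\<in>T. E z y}. component T E y)"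
  (is "?C = ?X")
proof
  have "u \<in> ?X" if "(z, u) \<in> (induced_rel (insert z T) E)\<^sup>*" for u
    using that
  proof (induction rule: rtrancl_induct)
    case (step x y)
    show ?case
    proof (cases "y = z")
      case False
      then have "y \<in> T" "E x y"
        using step.hyps(2) by (auto simp: induced_rel_def)
      show ?thesis
      proof (cases "x = z")
        case True
        then show ?thesis
          using \<open>y \<in> T\<close> \<open>E x y\<close> component_refl[of y T E] by blast
      next
        case False
        then obtain y0 where y0: "y0 \<in> T" "E z y0" and y0x: "(y0, x) \<in> (induced_rel T E)\<^sup>*"
          using step.IH unfolding component_induced_rel by blast
        have "(x, y) \<in> induced_rel T E"
          using False \<open>y \<in> T\<close> step.hyps(2) by (auto simp: induced_rel_def)
        with y0x have "(y0, y) \<in> (induced_rel T E)\<^sup>*"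
          by (rule rtrancl_into_rtrancl)
        then show ?thesis
          using y0 unfolding component_induced_rel by blast
      qed
    qed simp
  qed simp
  then show "?C \<subseteq> ?X"
    unfolding component_induced_rel by blast
next
  have "component T E y \<subseteq> ?C" if "y \<in> T" "E z y" for y
  proof -
    have zy: "(z, y) \<in> induced_rel (insert z T) E"
      using that by (simp add: induced_rel_def)
    show ?thesis
    proof
      fix u
      assume "u \<in> component T E y"
      then have "(y, u) \<in> (induced_rel (insert z T) E)\<^sup>*"
        using component_mono[of T "insert z T" E y] unfolding component_induced_rel by blast
      then have "(z, u) \<in> (induced_rel (insert z T) E)\<^sup>*"
        by (rule converse_rtrancl_into_rtrancl[OF zy])
      then show "u \<in> ?C"
        by (simp add: component_induced_rel)
    qed
  qed
  then show "?X \<subseteq> ?C"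
    using component_refl[of z "insert z T" E] by (simp add: UN_subset_iff)
qed

lemma component_insert_other:
  assumes "symp E" and "v \<in> T" and far: "\<And>y. y \<in> component T E v \<Longrightarrow> \<not> E z y"
  shows "component (insert z T) E v = component T E v"
proof
  have "u \<in> component T E v" if "(v, u) \<in> (induced_rel (insert z T) E)\<^sup>*" for u
    using that
  proof (induction rule: rtrancl_induct)
    case base
    then show ?case by (rule component_refl)
  next
    case (step x y)
    have "x \<in> T"
      using step.IH component_subset[OF \<open>v \<in> T\<close>] by blast
    moreover have "y \<noteq> z"
      using step far \<open>symp E\<close> by (auto simp: induced_rel_def dest: sympD)
    ultimately have "(x, y) \<in> induced_rel T E"
      using step.hyps(2) by (simp add: induced_rel_def)
    with step.IH show ?case
      unfolding component_induced_rel by (simp add: rtrancl_into_rtrancl)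
  qed
  then show "component (insert z T) E v \<subseteq> component T E v"
    unfolding component_induced_rel by blast
qed (rule component_mono, blast)

section \<open>Induced paths\<close>

definition path_list :: "('a \<Rightarrow> 'a \<Rightarrow> bool) \<Rightarrow> 'a list \<Rightarrow> bool" where
  "path_list E xs \<longleftrightarrow> xs \<noteq> [] \<and> distinct xs \<and>
     (\<forall>i<length xs. \<forall>j<length xs. E (xs ! i) (xs ! j) \<longleftrightarrow> i + 1 = j \<or> j + 1 = i)"

lemma is_path_graph_iff_path_list: "is_path_graph C E \<longleftrightarrow> (\<exists>xs. path_list E xs \<and> set xs = C)"
  unfolding is_path_graph_def path_list_def by blast

lemma is_path_graph_singleton: "\<not> E z z \<Longrightarrow> is_path_graph {z} E"
  unfolding is_path_graph_def by (intro exI[of _ "[z]"]) auto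

lemma path_list_rev:
  assumes "path_list E xs"
  shows "path_list E (rev xs)"
proof -
  let ?n = "length xs"
  have "E (rev xs ! i) (rev xs ! j) \<longleftrightarrow> i + 1 = j \<or> j + 1 = i" if "i < ?n" "j < ?n" for i j
  proof -
    have "E (rev xs ! i) (rev xs ! j) \<longleftrightarrow> E (xs ! (?n - Suc i)) (xs ! (?n - Suc j))"
      using that by (simp add: rev_nth)
    also have "\<dots> \<longleftrightarrow> ?n - Suc i + 1 = ?n - Suc j \<or> ?n - Suc j + 1 = ?n - Suc i"
      using assms that unfolding path_list_def by auto
    also have "\<dots> \<longleftrightarrow> i + 1 = j \<or> j + 1 = i"
      using that by arith
    finally show ?thesis .
  qed
  then show ?thesis
    using assms unfolding path_list_def by auto
qed

lemma path_list_inner_degree: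
  assumes "path_list E xs" and "0 < i" and "i + 1 < length xs"
  shows "2 \<le> degree (set xs) E (xs ! i)"
proof -
  have "xs ! (i - 1) \<noteq> xs ! (i + 1)"
    using assms unfolding path_list_def by (simp add: nth_eq_iff_index_eq)
  moreover have "{xs ! (i - 1), xs ! (i + 1)} \<subseteq> {y \<in> set xs. E (xs ! i) y}"
    using assms unfolding path_list_def by auto
  then have "card {xs ! (i - 1), xs ! (i + 1)} \<le> degree (set xs) E (xs ! i)"
    unfolding degree_def by (intro card_mono) auto
  ultimately show ?thesis
    by simp
qed

lemma path_list_snoc:
  assumes path: "path_list E ys" and "z \<notin> set ys" and "symp E" and "irreflp E"
    and adj: "\<And>y. y \<in> set ys \<Longrightarrow> E z y \<longleftrightarrow> y = last ys"
  shows "path_list E (ys @ [z])"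
proof -
  let ?n = "length ys"
  have "?n \<noteq> 0" and "distinct ys"
    using path unfolding path_list_def by auto
  have z_adj: "E z (ys ! j) \<longleftrightarrow> j + 1 = ?n" if "j < ?n" for j
  proof -
    have "ys ! j = last ys \<longleftrightarrow> j = ?n - 1"
      using that \<open>?n \<noteq> 0\<close> \<open>distinct ys\<close> by (simp add: last_conv_nth nth_eq_iff_index_eq)
    then show ?thesis
      using adj[of "ys ! j"] that by auto
  qed
  have "E ((ys @ [z]) ! i) ((ys @ [z]) ! j) \<longleftrightarrow> i + 1 = j \<or> j + 1 = i"
    if "i < Suc ?n" "j < Suc ?n" for i j
  proof (cases "i < ?n"; cases "j < ?n")
    assume "i < ?n" "j < ?n"
    then show ?thesis
      using path unfolding path_list_def by (simp add: nth_append)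
  next
    assume "i < ?n" "\<not> j < ?n"
    then show ?thesis
      using that z_adj[of i] \<open>symp E\<close> by (auto simp: nth_append dest: sympD)
  next
    assume "\<not> i < ?n" "j < ?n"
    then show ?thesis
      using that z_adj[of j] by (auto simp: nth_append)
  next
    assume "\<not> i < ?n" "\<not> j < ?n"
    then show ?thesis
      using that \<open>irreflp E\<close> by (auto simp: nth_append dest: irreflpD)
  qed
  then show ?thesis
    using path \<open>z \<notin> set ys\<close> unfolding path_list_def by auto
qed

lemma is_path_graph_insert_endpoint:
  assumes "symp E" and "irreflp E" and "is_path_graph C E"
    and "w \<in> C" and "degree C E w \<le> 1" and "z \<notin> C"
    and adj: "\<And>y. y \<in> C \<Longrightarrow> E z y \<longleftrightarrow> y = w"
  shows "is_path_graph (insert z C) E"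
proof -
  obtain xs where xs: "path_list E xs" "set xs = C"
    using \<open>is_path_graph C E\<close> unfolding is_path_graph_iff_path_list by blast
  then obtain i where i: "i < length xs" "xs ! i = w"
    using \<open>w \<in> C\<close> by (auto simp: in_set_conv_nth)
  have "\<not> (0 < i \<and> i + 1 < length xs)"
    using path_list_inner_degree[OF xs(1), of i] i xs(2) \<open>degree C E w \<le> 1\<close> by auto
  then have "i = 0 \<or> i + 1 = length xs"
    using i(1) by linarith
  then obtain ys where ys: "path_list E ys" "set ys = C" "last ys = w"
  proof
    assume "i = 0"
    with i xs show thesis
      by (intro that[of "rev xs"] path_list_rev) (auto simp: last_rev hd_conv_nth)
  next
    assume "i + 1 = length xs"
    then have "xs \<noteq> []" "length xs - 1 = i"
      by auto
    then show thesis
      using i xs by (intro that[of xs]) (auto simp: last_conv_nth)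
  qed
  have "path_list E (ys @ [z])"
    using ys adj \<open>z \<notin> C\<close> by (intro path_list_snoc \<open>symp E\<close> \<open>irreflp E\<close>) auto
  then show ?thesis
    unfolding is_path_graph_iff_path_list using ys(2) by auto
qed

section \<open>Linear forests in graphs of small maximum degree\<close>

lemma degree_mono:
  assumes "finite B" and "A \<subseteq> B"
  shows "degree A E x \<le> degree B E x"
  unfolding degree_def using assms by (intro card_mono) auto

lemma degree_Diff_neighbour:
  assumes "finite A" and "p \<in> A" and "E x p"
  shows "degree (A - {p}) E x = degree A E x - 1"
proof -
  have "{u \<in> A - {p}. E x u} = {u \<in> A. E x u} - {p}"
    by blast
  then show ?thesis
    unfolding degree_def using assms by (simp add: card_Diff_singleton)
qed

lemma is_path_graph_component_insert:
  assumes "symp E" and "irreflp E" and "finite T" and forest: "induced_linear_forest T E"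
    and "z \<notin> T" and "degree T E z \<le> 1"
    and nbr_degree: "\<And>w. w \<in> T \<Longrightarrow> E z w \<Longrightarrow> degree T E w \<le> 1"
  shows "is_path_graph (component (insert z T) E z) E"
proof (cases "{y \<in> T. E z y} = {}")
  case True
  then have "component (insert z T) E z = {z}"
    unfolding component_insert_new True by simp
  then show ?thesis
    using \<open>irreflp E\<close> by (simp add: is_path_graph_singleton irreflpD)
next
  case False
  then obtain w where "w \<in> T" "E z w"
    by blast
  then have N: "{y \<in> T. E z y} = {w}"
    using \<open>degree T E z \<le> 1\<close> \<open>finite T\<close> unfolding degree_def
    by (auto simp: card_le_Suc0_iff_eq)
  let ?C = "component T E w"
  have "?C \<subseteq> T"
    using \<open>w \<in> T\<close> by (rule component_subset)
  have "is_path_graph (insert z ?C) E"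
  proof (rule is_path_graph_insert_endpoint[OF \<open>symp E\<close> \<open>irreflp E\<close>])
    show "is_path_graph ?C E"
      using forest \<open>w \<in> T\<close> unfolding induced_linear_forest_def by blast
    show "degree ?C E w \<le> 1"
      using degree_mono[OF \<open>finite T\<close> \<open>?C \<subseteq> T\<close>] nbr_degree[OF \<open>w \<in> T\<close> \<open>E z w\<close>]
      by (rule order_trans)
    show "E z y \<longleftrightarrow> y = w" if "y \<in> ?C" for y
      using that N \<open>?C \<subseteq> T\<close> \<open>E z w\<close> by blast
  qed (use \<open>?C \<subseteq> T\<close> \<open>z \<notin> T\<close> component_refl in auto)
  then show ?thesis
    unfolding component_insert_new N by simp
qed

lemma induced_linear_forest_insert:
  assumes "symp E" and "irreflp E" and "finite T" and forest: "induced_linear_forest T E"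
    and "z \<notin> T" and "degree T E z \<le> 1"
    and "\<And>w. w \<in> T \<Longrightarrow> E z w \<Longrightarrow> degree T E w \<le> 1"
  shows "induced_linear_forest (insert z T) E"
proof -
  let ?Cz = "component (insert z T) E z"
  have "component (insert z T) E v = component T E v" if "v \<in> T" "v \<notin> ?Cz" for v
  proof (rule component_insert_other[OF \<open>symp E\<close> \<open>v \<in> T\<close>])
    fix y
    assume y: "y \<in> component T E v"
    show "\<not> E z y"
    proof
      assume "E z y"
      moreover have "y \<in> T"
        using y component_subset[OF \<open>v \<in> T\<close>] by blast
      ultimately have "component T E y \<subseteq> ?Cz"
        unfolding component_insert_new by blast
      moreover have "v \<in> component T E y"
        using component_eq[OF \<open>symp E\<close> y] component_refl[of v T E] by simp
      ultimately show False
        using \<open>v \<notin> ?Cz\<close> by blast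
    qed
  qed
  then show ?thesis
    using forest is_path_graph_component_insert[OF assms] component_eq[OF \<open>symp E\<close>]
      component_refl[of z "insert z T" E]
    unfolding induced_linear_forest_def by (metis insert_iff)
qed

lemma induced_linear_forest_empty: "induced_linear_forest {} E"
  unfolding induced_linear_forest_def by simp

lemma neighbour_other_than:
  assumes "finite A" and "2 \<le> degree A E u"
  shows "\<exists>x\<in>A. E u x \<and> x \<noteq> v"
proof (rule ccontr)
  assume "\<not> ?thesis"
  then have "{x \<in> A. E u x} \<subseteq> {v}"
    by blast
  then have "degree A E u \<le> 1"
    unfolding degree_def using card_mono[of "{v}"] by fastforce
  with assms(2) show False
    by simp
qed

lemma induced_linear_forest_of_degree_le_1:
  assumes "symp E" and "irreflp E" and "finite B" and deg: "\<forall>x\<in>B. degree B E x \<le> 1"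
  shows "induced_linear_forest B E"
  using \<open>finite B\<close> subset_refl
proof (induction rule: finite_subset_induct')
  case empty
  then show ?case
    by (rule induced_linear_forest_empty)
next
  case (insert z T)
  show ?case
  proof (rule induced_linear_forest_insert[OF \<open>symp E\<close> \<open>irreflp E\<close> \<open>finite T\<close> insert.IH \<open>z \<notin> T\<close>])
    show "degree T E z \<le> 1"
      using degree_mono[OF \<open>finite B\<close> \<open>T \<subseteq> B\<close>, of E z] deg \<open>z \<in> B\<close> by fastforce
    show "degree T E w \<le> 1" if "w \<in> T" for w
      using degree_mono[OF \<open>finite B\<close> \<open>T \<subseteq> B\<close>, of E w] deg \<open>w \<in> T\<close> \<open>T \<subseteq> B\<close> by fastforce
  qed
qed

lemma induced_linear_forest_insert_degree_le_2:
  assumes "symp E" and "irreflp E" and "finite A" and deg: "\<forall>x\<in>A. degree A E x \<le> 2"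
    and "T \<subseteq> A" and "induced_linear_forest T E" and "z \<in> A" and "z \<notin> T"
    and "degree T E z \<le> 1"
  shows "induced_linear_forest (insert z T) E"
proof (rule induced_linear_forest_insert[OF assms(1,2) _ assms(6,8,9)])
  show "finite T"
    using \<open>finite A\<close> \<open>T \<subseteq> A\<close> by (rule finite_subset[rotated])
  show "degree T E w \<le> 1" if "w \<in> T" "E z w" for w
  proof -
    have "degree T E w \<le> degree (A - {z}) E w"
      using \<open>finite A\<close> \<open>T \<subseteq> A\<close> \<open>z \<notin> T\<close> by (intro degree_mono) auto
    also have "\<dots> = degree A E w - 1"
      using that \<open>finite A\<close> \<open>z \<in> A\<close> \<open>symp E\<close> by (intro degree_Diff_neighbour) (auto dest: sympD)
    finally show ?thesis
      using deg that \<open>T \<subseteq> A\<close> by fastforce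
  qed
qed

text \<open>Removing a path \<open>v u x\<close> and reinserting \<open>x\<close> and \<open>u\<close>: \<open>x\<close> still misses its
  neighbour \<open>u\<close> and \<open>u\<close> its neighbour \<open>v\<close>, so both have degree at most 1 when added.\<close>

lemma induced_linear_forest_insert_path_ends:
  assumes "symp E" and "irreflp E" and "finite A" and deg: "\<forall>y\<in>A. degree A E y \<le> 2"
    and "S \<subseteq> A - {v, u, x}" and "induced_linear_forest S E"
    and "v \<in> A" and "u \<in> A" and "x \<in> A" and "E v u" and "E u x" and "x \<noteq> v"
  shows "induced_linear_forest (insert u (insert x S)) E"
proof -
  note insert = induced_linear_forest_insert_degree_le_2[OF assms(1-4)]
  have "x \<noteq> u"
    using \<open>E u x\<close> \<open>irreflp E\<close> by (auto dest: irreflpD)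
  have "degree S E x \<le> degree (A - {u}) E x"
    using assms(5) \<open>finite A\<close> by (intro degree_mono) auto
  also have "\<dots> = degree A E x - 1"
    using \<open>finite A\<close> \<open>u \<in> A\<close> \<open>E u x\<close> \<open>symp E\<close> by (intro degree_Diff_neighbour) (auto dest: sympD)
  finally have "induced_linear_forest (insert x S) E"
    using insert[OF _ assms(6) \<open>x \<in> A\<close>] assms(5) deg \<open>x \<in> A\<close> by fastforce
  moreover have "degree (insert x S) E u \<le> degree (A - {v}) E u"
    using assms(5) \<open>finite A\<close> \<open>x \<in> A\<close> \<open>x \<noteq> v\<close> by (intro degree_mono) auto
  moreover have "degree (A - {v}) E u = degree A E u - 1"
    using \<open>finite A\<close> \<open>v \<in> A\<close> \<open>E v u\<close> \<open>symp E\<close> by (intro degree_Diff_neighbour) (auto dest: sympD)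
  ultimately show ?thesis
    using insert[of "insert x S" u] assms(5) deg \<open>x \<in> A\<close> \<open>u \<in> A\<close> \<open>x \<noteq> u\<close>
    by fastforce
qed

lemma degree_le_2_induced_linear_forest_two_thirds:
  assumes "symp E" and "irreflp E"
  shows "finite A \<Longrightarrow> \<forall>x\<in>A. degree A E x \<le> 2 \<Longrightarrow>
    \<exists>S\<subseteq>A. induced_linear_forest S E \<and> 2 * card A \<le> 3 * card S"
proof (induction A rule: finite_psubset_induct)
  case (psubset A)
  have deg_sub: "\<forall>x\<in>A'. degree A' E x \<le> 2" if "A' \<subseteq> A" for A'
    using psubset.prems degree_mono[OF \<open>finite A\<close> that] that by (meson order_trans subsetD)
  consider "A = {}" | v where "v \<in> A" "degree A E v \<le> 1" | "A \<noteq> {}" "\<forall>v\<in>A. 2 \<le> degree A E v"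
    by force
  then show ?case
  proof cases
    case 1
    then show ?thesis
      using induced_linear_forest_empty by auto
  next
    case (2 v)
    obtain S where S: "S \<subseteq> A - {v}" "induced_linear_forest S E" "2 * card (A - {v}) \<le> 3 * card S"
      using psubset.IH[of "A - {v}"] deg_sub[of "A - {v}"] \<open>v \<in> A\<close> \<open>finite A\<close> by blast
    have "S \<subseteq> A"
      using S(1) by blast
    then have "degree S E v \<le> 1"
      using degree_mono[OF \<open>finite A\<close>, of S E v] \<open>degree A E v \<le> 1\<close> by simp
    then have "induced_linear_forest (insert v S) E"
      using S(1) by (intro induced_linear_forest_insert_degree_le_2[OF assms \<open>finite A\<close> psubset.prems
        \<open>S \<subseteq> A\<close> S(2) \<open>v \<in> A\<close>]) auto
    moreover have "card (insert v S) = card S + 1"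
      using S(1) finite_subset[OF \<open>S \<subseteq> A\<close> \<open>finite A\<close>] by (subst card_insert_disjoint) auto
    moreover have "card A = card (A - {v}) + 1"
      using card.remove[OF \<open>finite A\<close> \<open>v \<in> A\<close>] by simp
    ultimately show ?thesis
      using S \<open>v \<in> A\<close> by (intro exI[of _ "insert v S"]) auto
  next
    case 3
    then obtain v where "v \<in> A"
      by blast
    then obtain u where "u \<in> A" "E v u"
      using neighbour_other_than[OF \<open>finite A\<close>] 3(2) by blast
    then obtain x where "x \<in> A" "E u x" "x \<noteq> v"
      using neighbour_other_than[OF \<open>finite A\<close>] 3(2) by blast
    have "u \<noteq> v" "x \<noteq> u"
      using \<open>E v u\<close> \<open>E u x\<close> \<open>irreflp E\<close> by (auto dest: irreflpD)
    obtain S where S: "S \<subseteq> A - {v, u, x}" "induced_linear_forest S E"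
      "2 * card (A - {v, u, x}) \<le> 3 * card S"
      using psubset.IH[of "A - {v, u, x}"] deg_sub[of "A - {v, u, x}"] \<open>v \<in> A\<close> \<open>finite A\<close> by blast
    have "induced_linear_forest (insert u (insert x S)) E"
      using induced_linear_forest_insert_path_ends[OF assms \<open>finite A\<close> psubset.prems S(1,2)]
        \<open>v \<in> A\<close> \<open>u \<in> A\<close> \<open>x \<in> A\<close> \<open>E v u\<close> \<open>E u x\<close> \<open>x \<noteq> v\<close> by blast
    moreover have "card (insert u (insert x S)) = card S + 2"
    proof -
      have "finite S" "x \<notin> S" "u \<notin> S"
        using S(1) finite_subset[of S A] \<open>finite A\<close> by auto
      then show ?thesis
        using \<open>x \<noteq> u\<close> by simp
    qed
    moreover have "card (A - {v, u, x}) + 3 = card A"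
    proof -
      have "card {v, u, x} = 3" "{v, u, x} \<subseteq> A"
        using \<open>v \<in> A\<close> \<open>u \<in> A\<close> \<open>x \<in> A\<close> \<open>u \<noteq> v\<close> \<open>x \<noteq> u\<close> \<open>x \<noteq> v\<close> by auto
      moreover from this(2) have "card {v, u, x} \<le> card A"
        by (rule card_mono[OF \<open>finite A\<close>])
      moreover have "card (A - {v, u, x}) = card A - card {v, u, x}"
        by (rule card_Diff_subset) (use \<open>{v, u, x} \<subseteq> A\<close> in auto)
      ultimately show ?thesis
        by linarith
    qed
    ultimately show ?thesis
      using S \<open>x \<in> A\<close> \<open>u \<in> A\<close> by (intro exI[of _ "insert u (insert x S)"]) auto
  qed
qed

section \<open>Lov\'asz's partition theorem\<close>

lemma card_eq_sum_card_level_sets: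
  assumes "finite A" and "\<forall>x\<in>A. f x < (k::nat)"
  shows "card A = (\<Sum>j<k. card {x \<in> A. f x = j})"
proof -
  have "A = (\<Union>j<k. {x \<in> A. f x = j})"
    using assms(2) by auto
  also have "card \<dots> = (\<Sum>j<k. card {x \<in> A. f x = j})"
    using assms(1) by (intro card_UN_disjoint) auto
  finally show ?thesis .
qed

lemma degree_eq_sum_class_degrees:
  assumes "finite V" and "\<forall>x\<in>V. f x < (k::nat)"
  shows "degree V E v = (\<Sum>j<k. degree {y \<in> V. f y = j} E v)"
proof -
  have "degree V E v = (\<Sum>j<k. card {x \<in> {u \<in> V. E v u}. f x = j})"
    unfolding degree_def using assms by (intro card_eq_sum_card_level_sets) auto
  also have "\<dots> = (\<Sum>j<k. degree {y \<in> V. f y = j} E v)"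
    unfolding degree_def by (intro sum.cong arg_cong[where f = card]) auto
  finally show ?thesis .
qed

lemma exists_class_of_small_degree:
  assumes "finite V" and "\<forall>x\<in>V. f x < (k::nat)" and "degree V E v < (\<Sum>j<k. c j + 1)"
  shows "\<exists>j<k. degree {y \<in> V. f y = j} E v \<le> c j"
proof (rule ccontr)
  assume "\<not> ?thesis"
  then have "(\<Sum>j<k. c j + 1) \<le> (\<Sum>j<k. degree {y \<in> V. f y = j} E v)"
    by (intro sum_mono) (simp add: not_le Suc_le_eq)
  with assms show False
    by (simp add: degree_eq_sum_class_degrees)
qed

definition partition_potential ::
  "'a set \<Rightarrow> ('a \<Rightarrow> 'a \<Rightarrow> bool) \<Rightarrow> (nat \<Rightarrow> nat) \<Rightarrow> ('a \<Rightarrow> nat) \<Rightarrow> nat" where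
  "partition_potential V E w f = (\<Sum>x\<in>V. \<Sum>y\<in>V. if E x y \<and> f x = f y then w (f x) else 0)"

lemma partition_potential_remove:
  assumes "finite V" and "symp E" and "irreflp E" and "v \<in> V"
  shows "partition_potential V E w f =
    partition_potential (V - {v}) E w f + 2 * (w (f v) * degree {y \<in> V. f y = f v} E v)"
proof -
  define t where "t x y = (if E x y \<and> f x = f y then w (f x) else 0)" for x y
  define d where "d = degree {y \<in> V. f y = f v} E v"
  have row: "(\<Sum>y\<in>V. t v y) = w (f v) * d"
  proof -
    have "(\<Sum>y\<in>V. t v y) = (\<Sum>y\<in>V. if E v y \<and> f y = f v then w (f v) else 0)"
      unfolding t_def by (intro sum.cong) auto
    also have "\<dots> = (\<Sum>y \<in> {y \<in> V. E v y \<and> f y = f v}. w (f v))"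
      by (rule sum.inter_filter[symmetric, OF \<open>finite V\<close>])
    also have "{y \<in> V. E v y \<and> f y = f v} = {u \<in> {y \<in> V. f y = f v}. E v u}"
      by blast
    finally show ?thesis
      by (simp add: d_def degree_def)
  qed
  have col: "(\<Sum>x\<in>V - {v}. t x v) = w (f v) * d"
  proof -
    have "(\<Sum>x\<in>V. t x v) = (\<Sum>y\<in>V. t v y)"
      unfolding t_def using \<open>symp E\<close> by (intro sum.cong) (auto dest: sympD)
    moreover have "t v v = 0"
      unfolding t_def using \<open>irreflp E\<close> by (simp add: irreflpD)
    ultimately show ?thesis
      using row sum.remove[OF \<open>finite V\<close> \<open>v \<in> V\<close>, of "\<lambda>x. t x v"] by simp
  qed
  have "(\<Sum>x\<in>V. \<Sum>y\<in>V. t x y) = (\<Sum>y\<in>V. t v y) + (\<Sum>x\<in>V - {v}. \<Sum>y\<in>V. t x y)"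
    by (rule sum.remove[OF \<open>finite V\<close> \<open>v \<in> V\<close>])
  also have "(\<Sum>x\<in>V - {v}. \<Sum>y\<in>V. t x y) = (\<Sum>x\<in>V - {v}. t x v + (\<Sum>y\<in>V - {v}. t x y))"
    by (intro sum.cong refl sum.remove[OF \<open>finite V\<close> \<open>v \<in> V\<close>])
  also have "\<dots> = (\<Sum>x\<in>V - {v}. t x v) + (\<Sum>x\<in>V - {v}. \<Sum>y\<in>V - {v}. t x y)"
    by (rule sum.distrib)
  finally show ?thesis
    using row col unfolding partition_potential_def t_def d_def by simp
qed

lemma partition_potential_fun_upd:
  assumes "finite V" and "symp E" and "irreflp E" and "v \<in> V"
  shows "partition_potential V E w (f(v := j)) + 2 * (w (f v) * degree {y \<in> V. f y = f v} E v) =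
    partition_potential V E w f + 2 * (w j * degree {y \<in> V. f y = j} E v)"
proof -
  have "partition_potential (V - {v}) E w (f(v := j)) = partition_potential (V - {v}) E w f"
    unfolding partition_potential_def by (intro sum.cong) auto
  moreover have "degree {y \<in> V. (f(v := j)) y = j} E v = degree {y \<in> V. f y = j} E v"
    unfolding degree_def using \<open>irreflp E\<close> by (intro arg_cong[where f = card]) (auto dest: irreflpD)
  ultimately show ?thesis
    using partition_potential_remove[OF assms, of w "f(v := j)"]
      partition_potential_remove[OF assms, of w f] by simp
qed

theorem lovasz_partition:
  fixes k :: nat and c :: "nat \<Rightarrow> nat"
  assumes "finite V" and "symp E" and "irreflp E"
    and deg: "\<forall>v\<in>V. degree V E v < (\<Sum>j<k. c j + 1)" and c_pos: "\<forall>j<k. 1 \<le> c j"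
  shows "\<exists>f. (\<forall>x\<in>V. f x < k) \<and> (\<forall>x\<in>V. degree {y \<in> V. f y = f x} E x \<le> c (f x))"
proof -
  define L where "L = (\<Prod>j<k. c j)"
  define w where "w j = L div c j" for j
  txt \<open>With \<open>w j * c j = L\<close> for all classes, moving a vertex with more than \<open>c (f v)\<close>
    neighbours in its own class to a class where it has at most \<open>c j\<close> neighbours
    strictly decreases the potential.\<close>
  have "0 < L"
    unfolding L_def using c_pos by (intro prod_pos) auto
  have wc: "w j * c j = L" if "j < k" for j
  proof -
    have "c j dvd L"
      unfolding L_def using that by (intro dvd_prodI) auto
    then show ?thesis
      unfolding w_def by simp
  qed
  have w_pos: "1 \<le> w j" if "j < k" for j
    using wc[OF that] \<open>0 < L\<close> by (cases "w j") auto
  have "\<forall>x\<in>V. (0::nat) < k"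
    using deg by (auto intro: Nat.gr0I)
  then obtain f where f: "\<forall>x\<in>V. f x < k"
    and f_min: "\<And>g. \<forall>x\<in>V. g x < k \<Longrightarrow> partition_potential V E w f \<le> partition_potential V E w g"
    using ex_has_least_nat[of "\<lambda>f. \<forall>x\<in>V. f x < k" "\<lambda>_. 0" "partition_potential V E w"] by blast
  have "degree {y \<in> V. f y = f v} E v \<le> c (f v)" if "v \<in> V" for v
  proof (rule ccontr)
    let ?d = "\<lambda>j. degree {y \<in> V. f y = j} E v"
    assume "\<not> ?thesis"
    then have big: "c (f v) + 1 \<le> ?d (f v)"
      by simp
    obtain j where "j < k" "?d j \<le> c j"
      using exists_class_of_small_degree[OF \<open>finite V\<close> f] deg \<open>v \<in> V\<close> by blast
    have "w j * ?d j \<le> L"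
      using \<open>?d j \<le> c j\<close> wc[OF \<open>j < k\<close>] by (metis mult_le_mono2)
    also have "\<dots> < w (f v) * (c (f v) + 1)"
      using wc[of "f v"] w_pos[of "f v"] f \<open>v \<in> V\<close> by (simp add: algebra_simps)
    also have "\<dots> \<le> w (f v) * ?d (f v)"
      using big by (rule mult_le_mono2)
    finally have "partition_potential V E w (f(v := j)) < partition_potential V E w f"
      using partition_potential_fun_upd[OF assms(1-3) \<open>v \<in> V\<close>, of w f j] by linarith
    moreover have "partition_potential V E w f \<le> partition_potential V E w (f(v := j))"
      using f \<open>j < k\<close> by (intro f_min) simp
    ultimately show False
      by simp
  qed
  with f show ?thesis
    by blast
qed

section \<open>The lower bound and its sharpness\<close>

lemma finite_LIF_candidates:
  "finite V \<Longrightarrow> finite {card S |S. S \<subseteq> V \<and> induced_linear_forest S E}"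
  by (rule finite_subset[of _ "{..card V}"]) (auto intro: card_mono)

lemma card_le_LIF:
  assumes "finite V" and "S \<subseteq> V" and "induced_linear_forest S E"
  shows "card S \<le> LIF V E"
  unfolding LIF_def using assms by (intro Max_ge finite_LIF_candidates) auto

lemma LIF_le:
  assumes "finite V" and "\<And>S. S \<subseteq> V \<Longrightarrow> induced_linear_forest S E \<Longrightarrow> card S \<le> b"
  shows "LIF V E \<le> b"
  unfolding LIF_def using assms induced_linear_forest_empty
  by (intro Max.boundedI finite_LIF_candidates) auto

lemma simple_graphD:
  assumes "simple_graph V E"
  shows "finite V" and "symp E" and "irreflp E"
  using assms unfolding simple_graph_def symp_def irreflp_def by auto

lemma two_card_le_LIF_of_degree_le:
  assumes "symp E" and "irreflp E" and "finite V" and "P \<subseteq> V"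
    and deg: "\<forall>x\<in>P. degree P E x \<le> c" and "c = 1 \<or> c = 2"
  shows "2 * card P \<le> (c + 1) * LIF V E"
proof -
  have "finite P"
    using \<open>finite V\<close> \<open>P \<subseteq> V\<close> by (rule finite_subset[rotated])
  from \<open>c = 1 \<or> c = 2\<close> show ?thesis
  proof
    assume "c = 1"
    then have "induced_linear_forest P E"
      using deg by (intro induced_linear_forest_of_degree_le_1 assms(1,2) \<open>finite P\<close>) simp
    with \<open>finite V\<close> \<open>P \<subseteq> V\<close> have "card P \<le> LIF V E"
      by (rule card_le_LIF)
    then show ?thesis
      using \<open>c = 1\<close> by simp
  next
    assume "c = 2"
    then obtain S where "S \<subseteq> P" "induced_linear_forest S E" "2 * card P \<le> 3 * card S"
      using degree_le_2_induced_linear_forest_two_thirds[OF assms(1,2) \<open>finite P\<close>] deg by auto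
    moreover from this have "card S \<le> LIF V E"
      using \<open>P \<subseteq> V\<close> by (intro card_le_LIF \<open>finite V\<close>) auto
    ultimately show ?thesis
      using \<open>c = 2\<close> by simp
  qed
qed

lemma regular_LIF_lower_bound:
  assumes "simple_graph V E" and "regular V E r" and "1 \<le> r"
  shows "2 * card V \<le> (r + 1) * LIF V E"
proof -
  note graph = simple_graphD[OF assms(1)]
  define k where "k = (r + 1) div 2"
  define c :: "nat \<Rightarrow> nat" where "c j = (if j = 0 \<and> even r then 2 else 1)" for j
  obtain k' where "k = Suc k'"
    using \<open>1 \<le> r\<close> unfolding k_def by (cases "(r + 1) div 2") auto
  have "(\<Sum>j<k. c j + 1) = (c 0 + 1) + (\<Sum>j<k'. c (Suc j) + 1)"
    unfolding \<open>k = Suc k'\<close> by (rule sum.lessThan_Suc_shift)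
  also have "\<dots> = r + 1"
    using \<open>k = Suc k'\<close> unfolding c_def k_def by (auto elim!: evenE oddE)
  finally have c_sum: "(\<Sum>j<k. c j + 1) = r + 1" .
  have "\<forall>v\<in>V. degree V E v < (\<Sum>j<k. c j + 1)"
    using assms(2) c_sum unfolding regular_def by simp
  moreover have "\<forall>j<k. 1 \<le> c j"
    unfolding c_def by simp
  ultimately obtain f where f: "\<forall>x\<in>V. f x < k"
    and f_deg: "\<forall>x\<in>V. degree {y \<in> V. f y = f x} E x \<le> c (f x)"
    using lovasz_partition[OF graph] by blast
  have class_bound: "2 * card {x \<in> V. f x = j} \<le> (c j + 1) * LIF V E" for j
    using f_deg by (intro two_card_le_LIF_of_degree_le graph) (auto simp: c_def)
  have "2 * card V = (\<Sum>j<k. 2 * card {x \<in> V. f x = j})"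
    using card_eq_sum_card_level_sets[OF graph(1) f] by (simp add: sum_distrib_left)
  also have "\<dots> \<le> (\<Sum>j<k. (c j + 1) * LIF V E)"
    by (intro sum_mono class_bound)
  also have "\<dots> = (r + 1) * LIF V E"
    using c_sum by (simp only: sum_distrib_right[symmetric])
  finally show ?thesis .
qed

lemma component_clique:
  assumes "v \<in> S" and clique: "\<And>x y. x \<in> S \<Longrightarrow> y \<in> S \<Longrightarrow> x \<noteq> y \<Longrightarrow> E x y"
  shows "component S E v = S"
proof
  show "component S E v \<subseteq> S"
    using \<open>v \<in> S\<close> by (rule component_subset)
  show "S \<subseteq> component S E v"
  proof
    fix u
    assume "u \<in> S"
    then have "u = v \<or> (v, u) \<in> induced_rel S E"
      using \<open>v \<in> S\<close> clique by (auto simp: induced_rel_def)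
    then show "u \<in> component S E v"
      by (auto simp: component_induced_rel)
  qed
qed

lemma clique_induced_linear_forest_card_le_2:
  assumes clique: "\<And>x y. x \<in> S \<Longrightarrow> y \<in> S \<Longrightarrow> x \<noteq> y \<Longrightarrow> E x y"
    and "induced_linear_forest S E"
  shows "card S \<le> 2"
proof (rule ccontr)
  assume "\<not> card S \<le> 2"
  then have "S \<noteq> {}"
    by auto
  then obtain v where "v \<in> S"
    by blast
  have "component S E v = S"
    using \<open>v \<in> S\<close> clique by (rule component_clique)
  then have "is_path_graph S E"
    using assms(2) \<open>v \<in> S\<close> unfolding induced_linear_forest_def by metis
  then obtain xs where xs: "path_list E xs" "set xs = S"
    unfolding is_path_graph_iff_path_list by blast
  then have "distinct xs"
    unfolding path_list_def by simp
  then have "length xs = card S"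
    using distinct_card xs(2) by metis
  then have "2 < length xs"
    using \<open>\<not> card S \<le> 2\<close> by simp
  moreover from this have "0 < length xs"
    by linarith
  ultimately have "xs ! 0 \<in> S" "xs ! 2 \<in> S" "xs ! 0 \<noteq> xs ! 2"
    using xs(2) \<open>distinct xs\<close> nth_eq_iff_index_eq[of xs 0 2] by auto
  then have "E (xs ! 0) (xs ! 2)"
    by (rule clique)
  with xs(1) \<open>2 < length xs\<close> show False
    unfolding path_list_def by auto
qed

lemma complete_graph_simple_regular:
  assumes "finite V"
  shows "simple_graph V (\<lambda>x y. x \<in> V \<and> y \<in> V \<and> x \<noteq> y)"
    and "regular V (\<lambda>x y. x \<in> V \<and> y \<in> V \<and> x \<noteq> y) (card V - 1)"
proof -
  show "simple_graph V (\<lambda>x y. x \<in> V \<and> y \<in> V \<and> x \<noteq> y)"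
    unfolding simple_graph_def using assms by auto
  have "{u \<in> V. v \<in> V \<and> u \<in> V \<and> v \<noteq> u} = V - {v}" if "v \<in> V" for v
    using that by auto
  then show "regular V (\<lambda>x y. x \<in> V \<and> y \<in> V \<and> x \<noteq> y) (card V - 1)"
    unfolding regular_def degree_def using assms by simp
qed

lemma LIF_complete_graph:
  assumes "finite V" and "2 \<le> card V"
  shows "LIF V (\<lambda>x y. x \<in> V \<and> y \<in> V \<and> x \<noteq> y) = 2"
proof (rule antisym)
  let ?K = "\<lambda>x y. x \<in> V \<and> y \<in> V \<and> x \<noteq> y"
  show "LIF V ?K \<le> 2"
  proof (rule LIF_le[OF \<open>finite V\<close>])
    fix S
    assume "S \<subseteq> V" and "induced_linear_forest S ?K"
    then show "card S \<le> 2"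
      by (intro clique_induced_linear_forest_card_le_2[of S ?K]) auto
  qed
  obtain B where "B \<subseteq> V" "card B = 2"
    using obtain_subset_with_card_n[OF \<open>2 \<le> card V\<close>] by blast
  then obtain a b where "a \<in> V" "b \<in> V" "a \<noteq> b"
    by (auto simp: card_2_iff)
  have "degree {a, b} ?K x \<le> 1" if "x \<in> {a, b}" for x
  proof -
    have "{u \<in> {a, b}. ?K x u} = {a, b} - {x}"
      using that \<open>a \<in> V\<close> \<open>b \<in> V\<close> by auto
    then show ?thesis
      using that \<open>a \<noteq> b\<close> by (auto simp: degree_def)
  qed
  then have "induced_linear_forest {a, b} ?K"
    by (intro induced_linear_forest_of_degree_le_1) (auto simp: symp_def irreflp_def)
  then have "card {a, b} \<le> LIF V ?K"
    using \<open>finite V\<close> \<open>a \<in> V\<close> \<open>b \<in> V\<close> by (intro card_le_LIF) auto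
  with \<open>a \<noteq> b\<close> show "2 \<le> LIF V ?K"
    by simp
qed

theorem theorem1:
  shows "(\<forall>(V :: 'a set) E (r :: nat). simple_graph V E \<and> regular V E r \<and> r \<ge> 1 \<longrightarrow>
            real (LIF V E) \<ge> 2 / (real r + 1) * real (card V))
       \<and> (\<forall>(r :: nat) (V :: 'a set). r \<ge> 1 \<and> finite V \<and> card V = r + 1 \<longrightarrow>
            simple_graph V (\<lambda>x y. x \<in> V \<and> y \<in> V \<and> x \<noteq> y)
            \<and> regular V (\<lambda>x y. x \<in> V \<and> y \<in> V \<and> x \<noteq> y) r
            \<and> LIF V (\<lambda>x y. x \<in> V \<and> y \<in> V \<and> x \<noteq> y) = 2
            \<and> 2 / (real r + 1) * real (card V) = 2)"
proof (intro conjI allI impI; elim conjE)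
  fix V :: "'a set" and E and r :: nat
  assume "simple_graph V E" "regular V E r" "1 \<le> r"
  then have "real (2 * card V) \<le> real ((r + 1) * LIF V E)"
    by (simp only: of_nat_le_iff regular_LIF_lower_bound)
  then show "2 / (real r + 1) * real (card V) \<le> real (LIF V E)"
    by (simp add: field_simps)
next
  fix r :: nat and V :: "'a set"
  assume "1 \<le> r" "finite V" "card V = r + 1"
  then show "simple_graph V (\<lambda>x y. x \<in> V \<and> y \<in> V \<and> x \<noteq> y)"
    and "regular V (\<lambda>x y. x \<in> V \<and> y \<in> V \<and> x \<noteq> y) r"
    and "LIF V (\<lambda>x y. x \<in> V \<and> y \<in> V \<and> x \<noteq> y) = 2"
    using complete_graph_simple_regular[of V] LIF_complete_graph[of V] by simp_all
  show "2 / (real r + 1) * real (card V) = 2"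
    using \<open>card V = r + 1\<close> by (simp add: field_simps)
qed

end
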